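(* Let $N\ge1$, $m\ge1$ be integers, let $k_1,k_2,k_3,k$ be integers with $k_1+k_2+k_3=2k$, $0\le k_j\le k\le N$, put $n=mN-k$, and let $g$ be a non-negative integer. Let $\mathbf{P}_m^{(N|k_1,k_2,k_3)}(t_1,\dots,t_n)$ be the symmetric polynomial defined in the context and expand $\prod_{1\le i<j\le n}(t_i-t_j)^{2g}\,\mathbf{P}_m^{(N|k_1,k_2,k_3)}(t_1,\dots,t_n)=\sum_{\nu}C_{\nu_1,\dots,\nu_n}t_1^{\nu_1}\cdots t_n^{\nu_n}.$ If $\nu_1\le\nu_2\le\dots\le\nu_n$ and $C_{\nu_1,\dots,\nu_n}\neq0$, then the following inequalities hold: $\nu_{pN+j}\ge p+(pN+j-1)g$ for $p=0,\dots,m-2$, $j=1,\dots,N-k_1$; $\nu_{pN+j}\ge p+1+(pN+j-1)g$ for $p=0,\dots,m-2$, $j=N-k_1+1,\dots,N$; $\nu_{N(m-1)+j}\ge m-1+((m-1)N+j-1)g$ for $j=1,\dots,N-k$; and $\nu_{pN+j}\le m+p-1+((m+p)N-k+j-2)g$ for $p=0,\dots,m-1$, $j=1,\dots,N-k$; $\nu_{pN+j}\le m+p-1+((m+p)N-k+j-2)g$ for $p=0,\dots,m-2$, $j=N-k+1,\dots,N-k+k_3$; $\nu_{pN+j}\le m+p+((m+p)N-k+j-2)g$ for $p=0,\dots,m-2$, $j=N-k+k_3+1,\dots,N$.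
   Context: Definition: fix a partition of $\{1,\dots,n\}$ into $N$ groups $s_1,\dots,s_N$, where $s_1,\dots,s_k$ have $m-1$ elements each and $s_{k+1},\dots,s_N$ have $m$ elements each. Let $\chi_1=\{s_1,\dots,s_{k-k_1}\}$, $\chi_2=\{s_{k-k_1+1},\dots,s_{k_3}\}$, $\chi_3=\{s_{k_3+1},\dots,s_k\}$. Define $p(x_1,x_2,x_3|t_1,\dots,t_n)=\prod_{q=1}^N\prod_{i<j\in s_q}(t_i-t_j)^2\prod_{j\in\chi_1}(t_j-x_2)(t_j-x_3)\prod_{j\in\chi_2}(t_j-x_1)(t_j-x_3)\prod_{j\in\chi_3}(t_j-x_1)(t_j-x_2)$ ("$j\in\chi_a$" meaning $j$ lies in one of the groups of $\chi_a$), $\Lambda_m=\left[\frac{N^{n}k!(N-k)!}{N!}\right]^{1/2}(m!)^{N-k}((m-1)!)^{k}$, and $\mathbf{P}_m^{(N|k_1,k_2,k_3)}(x_1,x_2,x_3|t)=\Lambda_m^{-1}\sum_{\sigma\in S_n}p(x_1,x_2,x_3|t_{\sigma(1)},\dots,t_{\sigma(n)})$. Then $\mathbf{P}_m^{(N|k_1,k_2,k_3)}(t_1,\dots,t_n)=(-1)^{(m-1)k_1}\lim_{x_3\to\infty}x_3^{-(m-1)k_3}\,\mathbf{P}_m^{(N|k_1,k_2,k_3)}(0,1,x_3|t_1,\dots,t_n)$. *)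

theory Defs
  imports Complex_Main "HOL-Library.Poly_Mapping" "HOL-Combinatorics.Permutations"
begin

type_synonym mpoly = "(nat \<Rightarrow>\<^sub>0 nat) \<Rightarrow>\<^sub>0 real"

definition mvar :: "nat \<Rightarrow> mpoly" where
  "mvar i = Poly_Mapping.single (Poly_Mapping.single i 1) 1"

definition mconst :: "real \<Rightarrow> mpoly" where
  "mconst c = Poly_Mapping.single 0 c"

definition admissible_partition :: "nat \<Rightarrow> nat \<Rightarrow> nat \<Rightarrow> nat \<Rightarrow> (nat \<Rightarrow> nat set) \<Rightarrow> bool" where
  "admissible_partition N m k n s \<longleftrightarrow>
     (\<Union>q\<in>{1..N}. s q) = {1..n} \<and>
     (\<forall>q\<in>{1..N}. \<forall>q'\<in>{1..N}. q \<noteq> q' \<longrightarrow> s q \<inter> s q' = {}) \<and>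
     (\<forall>q\<in>{1..N}. finite (s q) \<and> card (s q) = (if q \<le> k then m - 1 else m))"

definition p_poly :: "nat \<Rightarrow> nat \<Rightarrow> nat \<Rightarrow> nat \<Rightarrow> (nat \<Rightarrow> nat set)
    \<Rightarrow> real \<Rightarrow> real \<Rightarrow> real \<Rightarrow> (nat \<Rightarrow> mpoly) \<Rightarrow> mpoly" where
  "p_poly N k k1 k3 s x1 x2 x3 f =
     (\<Prod>q\<in>{1..N}. \<Prod>(i,j)\<in>{(i,j). i \<in> s q \<and> j \<in> s q \<and> i < j}. (f i - f j)^2) *
     (\<Prod>j\<in>(\<Union>q\<in>{1..k-k1}. s q). (f j - mconst x2) * (f j - mconst x3)) *
     (\<Prod>j\<in>(\<Union>q\<in>{k-k1+1..k3}. s q). (f j - mconst x1) * (f j - mconst x3)) *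
     (\<Prod>j\<in>(\<Union>q\<in>{k3+1..k}. s q). (f j - mconst x1) * (f j - mconst x2))"

definition Lambda_m :: "nat \<Rightarrow> nat \<Rightarrow> nat \<Rightarrow> nat \<Rightarrow> real" where
  "Lambda_m N m k n =
     sqrt (real N ^ n * fact k * fact (N - k) / fact N) * fact m ^ (N - k) * fact (m - 1) ^ k"

definition P3 :: "nat \<Rightarrow> nat \<Rightarrow> nat \<Rightarrow> nat \<Rightarrow> nat \<Rightarrow> nat \<Rightarrow> (nat \<Rightarrow> nat set)
    \<Rightarrow> real \<Rightarrow> real \<Rightarrow> real \<Rightarrow> mpoly" where
  "P3 N m k k1 k3 n s x1 x2 x3 =
     mconst (inverse (Lambda_m N m k n)) *
     (\<Sum>\<sigma>\<in>{\<sigma>. \<sigma> permutes {1..n}}. p_poly N k k1 k3 s x1 x2 x3 (\<lambda>i. mvar (\<sigma> i)))"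

definition P_poly :: "nat \<Rightarrow> nat \<Rightarrow> nat \<Rightarrow> nat \<Rightarrow> nat \<Rightarrow> nat \<Rightarrow> (nat \<Rightarrow> nat set) \<Rightarrow> mpoly" where
  "P_poly N m k k1 k3 n s = Abs_poly_mapping (\<lambda>\<alpha>.
     (-1) ^ ((m - 1) * k1) *
     Lim at_top (\<lambda>x3::real. Poly_Mapping.lookup (P3 N m k k1 k3 n s 0 1 x3) \<alpha> / x3 ^ ((m - 1) * k3)))"

definition vandermonde_sq :: "nat \<Rightarrow> nat \<Rightarrow> mpoly" where
  "vandermonde_sq n g = (\<Prod>(i,j)\<in>{(i,j). 1 \<le> i \<and> i < j \<and> j \<le> n}. (mvar i - mvar j) ^ (2 * g))"

end

theory Submission
  imports Defs "HOL-Computational_Algebra.Polynomial"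
begin

text \<open>
  For a set S of variables, the S-degree of a monomial is the sum of its exponents on S; on the
  monomials of a product it lies between the sums of the corresponding bounds for the factors.
  Consider the term of P coming from a permutation \<open>\<sigma>\<close>, and let c q be the number of variables of
  the group s q sent into S. A factor \<open>(t a - t b)\<^sup>2\<close> has S-degree 2 if both variables lie in S and
  at most 2 if one of them does; a linear factor has S-degree at least 1 if it is the variable
  itself, and at most 1 plus its power of x3, where x3 is kept formal because P is the leading
  x3-coefficient of P(0, 1, x3). Minimising, resp. maximising, the resulting quadratic expressions
  in the c q subject to \<open>\<Sum>q. c q = card S\<close> bounds the S-degree of every monomial of the product of
  the Vandermonde power with P. For S = {1..i} and S = {i..n}, a sorted exponent vector \<open>\<nu>\<close> has
  S-degree at most \<open>i * \<nu> i\<close>, resp. at least \<open>(n - i + 1) * \<nu> i\<close>, which gives the bounds on \<open>\<nu> i\<close>.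
\<close>

section \<open>Partial degrees of multivariate polynomials\<close>

definition deg_on :: "nat set \<Rightarrow> (nat \<Rightarrow>\<^sub>0 nat) \<Rightarrow> int" where
  "deg_on S \<alpha> = (\<Sum>v\<in>S. int (Poly_Mapping.lookup \<alpha> v))"

lemma deg_on_add: "deg_on S (\<alpha> + \<beta>) = deg_on S \<alpha> + deg_on S \<beta>"
  by (simp add: deg_on_def lookup_add sum.distrib)

lemma deg_on_nonneg: "0 \<le> deg_on S \<alpha>"
  by (simp add: deg_on_def sum_nonneg)

lemma deg_on_zero [simp]: "deg_on S 0 = 0"
  by (simp add: deg_on_def)

lemma deg_on_single: "finite S \<Longrightarrow> deg_on S (Poly_Mapping.single v 1) = (if v \<in> S then 1 else 0)"
  by (simp add: deg_on_def lookup_single when_def if_distrib[of int] sum.delta cong: if_cong)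

definition deg_on_ge :: "nat set \<Rightarrow> int \<Rightarrow> mpoly \<Rightarrow> bool" where
  "deg_on_ge S L f \<longleftrightarrow> (\<forall>\<alpha>\<in>Poly_Mapping.keys f. L \<le> deg_on S \<alpha>)"

definition deg_on_le :: "nat set \<Rightarrow> int \<Rightarrow> mpoly \<Rightarrow> bool" where
  "deg_on_le S U f \<longleftrightarrow> (\<forall>\<alpha>\<in>Poly_Mapping.keys f. deg_on S \<alpha> \<le> U)"

lemma deg_on_ge_zero [simp]: "deg_on_ge S L 0"
  and deg_on_le_zero [simp]: "deg_on_le S U 0"
  by (simp_all add: deg_on_ge_def deg_on_le_def)

lemma deg_on_ge_mono: "deg_on_ge S L f \<Longrightarrow> L' \<le> L \<Longrightarrow> deg_on_ge S L' f"
  unfolding deg_on_ge_def by force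

lemma deg_on_le_mono: "deg_on_le S U f \<Longrightarrow> U \<le> U' \<Longrightarrow> deg_on_le S U' f"
  unfolding deg_on_le_def by force

lemma deg_on_ge_0: "deg_on_ge S 0 f"
  unfolding deg_on_ge_def using deg_on_nonneg by blast

lemma deg_on_ge_mult: "deg_on_ge S L f \<Longrightarrow> deg_on_ge S L' g \<Longrightarrow> deg_on_ge S (L + L') (f * g)"
  unfolding deg_on_ge_def using keys_mult[of f g] by (force simp: deg_on_add)

lemma deg_on_le_mult: "deg_on_le S U f \<Longrightarrow> deg_on_le S U' g \<Longrightarrow> deg_on_le S (U + U') (f * g)"
  unfolding deg_on_le_def using keys_mult[of f g] by (force simp: deg_on_add)

lemma deg_on_ge_diff: "deg_on_ge S L f \<Longrightarrow> deg_on_ge S L g \<Longrightarrow> deg_on_ge S L (f - g)"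
  unfolding deg_on_ge_def using keys_diff[of f g] by blast

lemma deg_on_le_diff: "deg_on_le S U f \<Longrightarrow> deg_on_le S U g \<Longrightarrow> deg_on_le S U (f - g)"
  unfolding deg_on_le_def using keys_diff[of f g] by blast

lemma deg_on_ge_sum: "(\<And>i. i \<in> I \<Longrightarrow> deg_on_ge S L (f i)) \<Longrightarrow> deg_on_ge S L (sum f I)"
  unfolding deg_on_ge_def using keys_sum[of f I] by blast

lemma deg_on_le_sum: "(\<And>i. i \<in> I \<Longrightarrow> deg_on_le S U (f i)) \<Longrightarrow> deg_on_le S U (sum f I)"
  unfolding deg_on_le_def using keys_sum[of f I] by blast

lemma deg_on_le_one: "deg_on_le S 0 1"
  by (simp add: deg_on_le_def)

lemma deg_on_ge_prod:
  "finite I \<Longrightarrow> (\<And>i. i \<in> I \<Longrightarrow> deg_on_ge S (L i) (f i)) \<Longrightarrow> deg_on_ge S (\<Sum>i\<in>I. L i) (\<Prod>i\<in>I. f i)"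
  by (induction I rule: finite_induct) (auto simp: deg_on_ge_0 intro: deg_on_ge_mult)

lemma deg_on_le_prod:
  "finite I \<Longrightarrow> (\<And>i. i \<in> I \<Longrightarrow> deg_on_le S (U i) (f i)) \<Longrightarrow> deg_on_le S (\<Sum>i\<in>I. U i) (\<Prod>i\<in>I. f i)"
  by (induction I rule: finite_induct) (auto simp: deg_on_le_one intro: deg_on_le_mult)

lemma deg_on_ge_power: "deg_on_ge S L f \<Longrightarrow> deg_on_ge S (int r * L) (f ^ r)"
  by (induction r) (auto simp: deg_on_ge_0 algebra_simps dest: deg_on_ge_mult)

lemma deg_on_le_power: "deg_on_le S U f \<Longrightarrow> deg_on_le S (int r * U) (f ^ r)"
  by (induction r) (auto simp: deg_on_le_one algebra_simps dest: deg_on_le_mult)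

lemma deg_on_le_mconst: "deg_on_le S 0 (mconst c)"
  by (simp add: deg_on_le_def mconst_def)

lemma deg_on_ge_mconst_mult: "deg_on_ge S L f \<Longrightarrow> deg_on_ge S L (mconst a * f)"
  using deg_on_ge_mult[OF deg_on_ge_0] by fastforce

lemma deg_on_le_mconst_mult: "deg_on_le S U f \<Longrightarrow> deg_on_le S U (mconst a * f)"
  using deg_on_le_mult[OF deg_on_le_mconst] by fastforce

lemma deg_on_ge_mvar: "finite S \<Longrightarrow> deg_on_ge S (if v \<in> S then 1 else 0) (mvar v)"
  and deg_on_le_mvar: "finite S \<Longrightarrow> deg_on_le S (if v \<in> S then 1 else 0) (mvar v)"
  unfolding deg_on_ge_def deg_on_le_def mvar_def using deg_on_single[of S v] by auto

lemma deg_on_le_mvar_diff_mconst: "finite S \<Longrightarrow> deg_on_le S (if v \<in> S then 1 else 0) (mvar v - mconst a)"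
  by (intro deg_on_le_diff deg_on_le_mvar) (auto intro: deg_on_le_mono[OF deg_on_le_mconst])

lemma deg_on_ge_diff_power:
  assumes "finite S"
  shows "deg_on_ge S (if a \<in> S \<and> b \<in> S then int r else 0) ((mvar a - mvar b) ^ r)"
proof (cases "a \<in> S \<and> b \<in> S")
  case True
  then have "deg_on_ge S 1 (mvar a - mvar b)"
    using deg_on_ge_mvar[OF assms, of a] deg_on_ge_mvar[OF assms, of b] by (simp add: deg_on_ge_diff)
  from deg_on_ge_power[OF this, of r] True show ?thesis
    by simp
next
  case False
  then show ?thesis
    by (simp only: if_False deg_on_ge_0)
qed

lemma deg_on_le_diff_power:
  assumes "finite S"
  shows "deg_on_le S (if a \<in> S \<or> b \<in> S then int r else 0) ((mvar a - mvar b) ^ r)"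
proof -
  have "deg_on_le S (if a \<in> S \<or> b \<in> S then 1 else 0) (mvar a - mvar b)"
    by (intro deg_on_le_diff; rule deg_on_le_mono[OF deg_on_le_mvar[OF assms]]) auto
  from deg_on_le_power[OF this, of r] show ?thesis
    by (cases "a \<in> S \<or> b \<in> S") simp_all
qed

lemma deg_on_atLeastAtMost_le:
  assumes "mono_on {1..n} (Poly_Mapping.lookup \<nu>)" "i \<le> n"
  shows "deg_on {1..i} \<nu> \<le> int i * int (Poly_Mapping.lookup \<nu> i)"
proof -
  have "deg_on {1..i} \<nu> \<le> (\<Sum>v\<in>{1..i}. int (Poly_Mapping.lookup \<nu> i))"
    unfolding deg_on_def using assms by (intro sum_mono) (auto intro: mono_onD[OF assms(1)])
  then show ?thesis
    by simp
qed

lemma atLeastAtMost_le_deg_on: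
  assumes "mono_on {1..n} (Poly_Mapping.lookup \<nu>)" "1 \<le> i"
  shows "(int n - int i + 1) * int (Poly_Mapping.lookup \<nu> i) \<le> deg_on {i..n} \<nu>"
proof (cases "i \<le> n")
  case True
  have "(\<Sum>v\<in>{i..n}. int (Poly_Mapping.lookup \<nu> i)) \<le> deg_on {i..n} \<nu>"
    unfolding deg_on_def using assms by (intro sum_mono) (auto intro: mono_onD[OF assms(1)])
  with True show ?thesis
    by (simp add: of_nat_diff algebra_simps)
next
  case False
  then show ?thesis
    by (simp add: deg_on_def mult_nonpos_nonneg)
qed

section \<open>Polynomials in x3 with multivariate coefficients\<close>

text \<open>Degree bounds for all x3-coefficients, with x3 counted with weight c: with weight 1, an upper
  bound U for the polynomial bounds its coefficient of \<open>x3 ^ e\<close> by \<open>U - e\<close>.\<close>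

definition wdeg_on_ge :: "int \<Rightarrow> nat set \<Rightarrow> int \<Rightarrow> mpoly poly \<Rightarrow> bool" where
  "wdeg_on_ge c S L Q \<longleftrightarrow> (\<forall>e. deg_on_ge S (L - c * int e) (coeff Q e))"

definition wdeg_on_le :: "int \<Rightarrow> nat set \<Rightarrow> int \<Rightarrow> mpoly poly \<Rightarrow> bool" where
  "wdeg_on_le c S U Q \<longleftrightarrow> (\<forall>e. deg_on_le S (U - c * int e) (coeff Q e))"

lemma wdeg_on_ge_mult:
  assumes "wdeg_on_ge c S L P" "wdeg_on_ge c S L' Q" shows "wdeg_on_ge c S (L + L') (P * Q)"
  unfolding wdeg_on_ge_def coeff_mult
proof (intro allI deg_on_ge_sum)
  fix e i :: nat assume "i \<in> {..e}"
  then have "L + L' - c * int e = (L - c * int i) + (L' - c * int (e - i))"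
    by (simp add: of_nat_diff algebra_simps)
  then show "deg_on_ge S (L + L' - c * int e) (coeff P i * coeff Q (e - i))"
    using assms deg_on_ge_mult unfolding wdeg_on_ge_def by metis
qed

lemma wdeg_on_le_mult:
  assumes "wdeg_on_le c S U P" "wdeg_on_le c S U' Q" shows "wdeg_on_le c S (U + U') (P * Q)"
  unfolding wdeg_on_le_def coeff_mult
proof (intro allI deg_on_le_sum)
  fix e i :: nat assume "i \<in> {..e}"
  then have "U + U' - c * int e = (U - c * int i) + (U' - c * int (e - i))"
    by (simp add: of_nat_diff algebra_simps)
  then show "deg_on_le S (U + U' - c * int e) (coeff P i * coeff Q (e - i))"
    using assms deg_on_le_mult unfolding wdeg_on_le_def by metis
qed

lemma wdeg_on_le_diff: "wdeg_on_le c S U P \<Longrightarrow> wdeg_on_le c S U Q \<Longrightarrow> wdeg_on_le c S U (P - Q)"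
  unfolding wdeg_on_le_def by (simp add: deg_on_le_diff)

lemma wdeg_on_ge_mono: "wdeg_on_ge c S L P \<Longrightarrow> L' \<le> L \<Longrightarrow> wdeg_on_ge c S L' P"
  unfolding wdeg_on_ge_def by (meson deg_on_ge_mono diff_right_mono)

lemma wdeg_on_le_mono: "wdeg_on_le c S U P \<Longrightarrow> U \<le> U' \<Longrightarrow> wdeg_on_le c S U' P"
  unfolding wdeg_on_le_def by (meson deg_on_le_mono diff_right_mono)

lemma wdeg_on_ge_one: "wdeg_on_ge c S 0 1" and wdeg_on_le_one: "wdeg_on_le c S 0 1"
  unfolding wdeg_on_ge_def wdeg_on_le_def by (auto simp: coeff_1 deg_on_ge_0 deg_on_le_one)

lemma wdeg_on_ge_prod:
  "finite I \<Longrightarrow> (\<And>i. i \<in> I \<Longrightarrow> wdeg_on_ge c S (L i) (f i)) \<Longrightarrow> wdeg_on_ge c S (\<Sum>i\<in>I. L i) (\<Prod>i\<in>I. f i)"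
  by (induction I rule: finite_induct) (auto simp: wdeg_on_ge_one intro: wdeg_on_ge_mult)

lemma wdeg_on_le_prod:
  "finite I \<Longrightarrow> (\<And>i. i \<in> I \<Longrightarrow> wdeg_on_le c S (U i) (f i)) \<Longrightarrow> wdeg_on_le c S (\<Sum>i\<in>I. U i) (\<Prod>i\<in>I. f i)"
  by (induction I rule: finite_induct) (auto simp: wdeg_on_le_one intro: wdeg_on_le_mult)

lemma wdeg_on_ge_const: "deg_on_ge S L f \<Longrightarrow> wdeg_on_ge c S L [:f:]"
  unfolding wdeg_on_ge_def by (auto simp: coeff_pCons split: nat.split)

lemma wdeg_on_le_const: "deg_on_le S U f \<Longrightarrow> wdeg_on_le c S U [:f:]"
  unfolding wdeg_on_le_def by (auto simp: coeff_pCons split: nat.split)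

lemma wdeg_on_ge_weight_0: "wdeg_on_ge 0 S 0 Q"
  unfolding wdeg_on_ge_def by (simp add: deg_on_ge_0)

lemma wdeg_on_le_X: "wdeg_on_le c S c [:0, 1:]"
  unfolding wdeg_on_le_def by (auto simp: coeff_pCons deg_on_le_one split: nat.split)

lemma mconst_0 [simp]: "mconst 0 = 0"
  by (simp add: mconst_def)

lemma mconst_mult: "mconst a * mconst b = mconst (a * b)"
  by (simp add: mconst_def mult_single)

lemma mconst_power: "mconst a ^ r = mconst (a ^ r)"
  by (induction r) (simp_all add: mconst_mult, simp add: mconst_def)

lemma lookup_mconst_mult: "Poly_Mapping.lookup (mconst c * f) \<alpha> = c * Poly_Mapping.lookup f \<alpha>"
  unfolding mconst_def mult_map_scale_conv_mult[symmetric] by transfer (simp add: when_def)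

lemma degree_prod_le: "(\<And>x. x \<in> A \<Longrightarrow> degree (f x) \<le> d) \<Longrightarrow> degree (prod f A) \<le> d * card A"
proof (cases "finite A")
  case True
  assume "\<And>x. x \<in> A \<Longrightarrow> degree (f x) \<le> d"
  then have "sum (degree \<circ> f) A \<le> sum (\<lambda>_. d) A"
    by (intro sum_mono) simp
  with degree_prod_sum_le[OF True, of f] show ?thesis
    by (simp add: mult.commute)
qed simp

lemma lookup_poly_mconst:
  assumes "degree Q \<le> D"
  shows "Poly_Mapping.lookup (poly Q (mconst x)) \<alpha> = (\<Sum>e\<le>D. Poly_Mapping.lookup (coeff Q e) \<alpha> * x ^ e)"
proof -
  have "poly Q (mconst x) = (\<Sum>e\<le>degree Q. coeff Q e * mconst x ^ e)"
    by (rule poly_altdef)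
  also have "\<dots> = (\<Sum>e\<le>D. coeff Q e * mconst x ^ e)"
    by (rule sum.mono_neutral_left) (use assms in \<open>auto simp: coeff_eq_0\<close>)
  finally show ?thesis
    by (simp add: lookup_sum mconst_power mult.commute[of _ "mconst _"] lookup_mconst_mult, simp add: mult.commute)
qed

lemma tendsto_lookup_poly_mconst:
  fixes Q :: "mpoly poly"
  assumes "degree Q \<le> D"
  shows "((\<lambda>x. Poly_Mapping.lookup (poly Q (mconst x)) \<alpha> / x ^ D) \<longlongrightarrow> Poly_Mapping.lookup (coeff Q D) \<alpha>) at_top"
proof -
  define a where "a e = Poly_Mapping.lookup (coeff Q e) \<alpha>" for e
  have "\<forall>\<^sub>F x in at_top. a D + (\<Sum>e<D. a e * inverse x ^ (D - e)) = Poly_Mapping.lookup (poly Q (mconst x)) \<alpha> / x ^ D"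
    using eventually_gt_at_top[of "0::real"]
  proof eventually_elim
    case (elim x)
    have "a e * x ^ e / x ^ D = a e * inverse x ^ (D - e)" if "e < D" for e
      using that elim by (simp add: power_diff_conv_inverse divide_inverse power_inverse)
    then have "(\<Sum>e\<in>insert D {..<D}. a e * x ^ e / x ^ D) = a D + (\<Sum>e<D. a e * inverse x ^ (D - e))"
      using elim by simp
    moreover have "insert D {..<D} = {..D}"
      by auto
    ultimately show ?case
      by (simp add: lookup_poly_mconst[OF assms] sum_divide_distrib a_def)
  qed
  moreover have "((\<lambda>x::real. a D + (\<Sum>e<D. a e * inverse x ^ (D - e))) \<longlongrightarrow> a D + (\<Sum>e<D. a e * 0 ^ (D - e))) at_top"
    by (intro tendsto_intros tendsto_inverse_0_at_top filterlim_ident)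
  moreover have "(\<Sum>e<D. a e * 0 ^ (D - e)) = 0"
    by (intro sum.neutral) auto
  ultimately show ?thesis
    by (simp add: tendsto_cong a_def)
qed

definition pairs :: "'a::linorder set \<Rightarrow> ('a \<times> 'a) set" where
  "pairs A = {(a, b). a \<in> A \<and> b \<in> A \<and> a < b}"

lemma finite_pairs: "finite A \<Longrightarrow> finite (pairs A)"
  by (rule finite_subset[of _ "A \<times> A"]) (auto simp: pairs_def)

lemma card_pairs:
  assumes "finite A"
  shows "card (pairs A) = card A choose 2"
proof -
  have "bij_betw (\<lambda>(a, b). {a, b}) (pairs A) {B. B \<subseteq> A \<and> card B = 2}"
  proof (rule bij_betwI')
    fix x y assume "x \<in> pairs A" "y \<in> pairs A"
    then show "((\<lambda>(a, b). {a, b}) x = (\<lambda>(a, b). {a, b}) y) = (x = y)"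
      by (cases x, cases y) (auto simp: pairs_def doubleton_eq_iff)
  next
    fix x assume "x \<in> pairs A"
    then show "(\<lambda>(a, b). {a, b}) x \<in> {B. B \<subseteq> A \<and> card B = 2}"
      by (cases x) (auto simp: pairs_def)
  next
    fix B assume "B \<in> {B. B \<subseteq> A \<and> card B = 2}"
    then obtain a b where "B = {a, b}" "a \<noteq> b" "a \<in> A" "b \<in> A"
      unfolding card_2_iff by blast
    then show "\<exists>x\<in>pairs A. B = (\<lambda>(a, b). {a, b}) x"
      by (cases "a < b") (force simp: pairs_def)+
  qed
  then show ?thesis
    using n_subsets[OF assms] bij_betw_same_card by fastforce
qed

lemma two_card_pairs:
  assumes "finite A"
  shows "2 * int (card (pairs A)) = int (card A) * (int (card A) - 1)"
proof -
  have "2 * card (pairs A) = card A * (card A - 1)"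
    using card_pairs[OF assms] by (metis Suc_1 binomial_absorption choose_one)
  then show ?thesis
    by (cases "card A") (simp_all add: algebra_simps flip: of_nat_mult)
qed

lemma sum_pairs_indicator:
  assumes "finite A"
  shows "(\<Sum>x\<in>pairs A. if P (fst x) \<and> P (snd x) then c else 0) = c * int (card (pairs {a\<in>A. P a}))"
proof -
  have "{x\<in>pairs A. P (fst x) \<and> P (snd x)} = pairs {a\<in>A. P a}"
    by (auto simp: pairs_def)
  then show ?thesis
    using sum.inter_filter[OF finite_pairs[OF assms], of "\<lambda>_. c" "\<lambda>x. P (fst x) \<and> P (snd x)"]
    by (simp add: mult.commute)
qed

definition count_into :: "(nat \<Rightarrow> nat) \<Rightarrow> nat set \<Rightarrow> nat set \<Rightarrow> int" where
  "count_into \<sigma> S A = int (card {a\<in>A. \<sigma> a \<in> S})"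

lemma sum_indicator_count_into: "finite A \<Longrightarrow> (\<Sum>j\<in>A. if \<sigma> j \<in> S then 1 else 0) = count_into \<sigma> S A"
  by (simp add: count_into_def flip: sum.inter_filter)

lemma deg_on_ge_prod_pairs:
  fixes \<sigma> :: "nat \<Rightarrow> nat"
  assumes "finite A" "finite S"
  defines "c \<equiv> count_into \<sigma> S A"
  shows "deg_on_ge S (int r * c * (c - 1)) (\<Prod>(a, b)\<in>pairs A. (mvar (\<sigma> a) - mvar (\<sigma> b)) ^ (2 * r))"
proof -
  have "deg_on_ge S (\<Sum>x\<in>pairs A. if \<sigma> (fst x) \<in> S \<and> \<sigma> (snd x) \<in> S then int (2 * r) else 0)
      (\<Prod>(a, b)\<in>pairs A. (mvar (\<sigma> a) - mvar (\<sigma> b)) ^ (2 * r))"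
    unfolding split_def by (intro deg_on_ge_prod finite_pairs deg_on_ge_diff_power assms)
  moreover have "(\<Sum>x\<in>pairs A. if \<sigma> (fst x) \<in> S \<and> \<sigma> (snd x) \<in> S then int (2 * r) else 0) = int r * c * (c - 1)"
    using sum_pairs_indicator[OF assms(1), of "\<lambda>a. \<sigma> a \<in> S" "int (2 * r)"]
      two_card_pairs[of "{a\<in>A. \<sigma> a \<in> S}"] assms(1)
    by (simp add: c_def count_into_def)
  ultimately show ?thesis
    by simp
qed

lemma deg_on_le_prod_pairs:
  fixes \<sigma> :: "nat \<Rightarrow> nat"
  assumes "finite A" "finite S"
  defines "c \<equiv> count_into \<sigma> S A" and "M \<equiv> int (card A)"
  shows "deg_on_le S (int r * (M * (M - 1) - (M - c) * (M - c - 1)))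
      (\<Prod>(a, b)\<in>pairs A. (mvar (\<sigma> a) - mvar (\<sigma> b)) ^ (2 * r))"
proof -
  let ?B = "{a\<in>A. \<sigma> a \<notin> S}"
  have "deg_on_le S (\<Sum>x\<in>pairs A. if \<sigma> (fst x) \<in> S \<or> \<sigma> (snd x) \<in> S then int (2 * r) else 0)
      (\<Prod>(a, b)\<in>pairs A. (mvar (\<sigma> a) - mvar (\<sigma> b)) ^ (2 * r))"
    unfolding split_def by (intro deg_on_le_prod finite_pairs deg_on_le_diff_power assms)
  moreover have "int (card ?B) = M - c"
  proof -
    have "card A = card ?B + card {a\<in>A. \<sigma> a \<in> S}"
      using assms(1) by (subst card_Un_disjoint[symmetric]) (auto intro: arg_cong[of _ _ card])
    then show ?thesis
      by (simp add: M_def c_def count_into_def)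
  qed
  moreover have "(\<Sum>x\<in>pairs A. if \<sigma> (fst x) \<in> S \<or> \<sigma> (snd x) \<in> S then int (2 * r) else 0)
      = (\<Sum>x\<in>pairs A. int (2 * r) - (if \<sigma> (fst x) \<notin> S \<and> \<sigma> (snd x) \<notin> S then int (2 * r) else 0))"
    by (intro sum.cong) auto
  ultimately show ?thesis
    using sum_pairs_indicator[OF assms(1), of "\<lambda>a. \<sigma> a \<notin> S" "int (2 * r)"]
      two_card_pairs[OF assms(1)] two_card_pairs[of ?B] assms(1)
    by (simp add: sum_subtractf M_def algebra_simps)
qed

lemma vandermonde_sq_pairs: "vandermonde_sq n g = (\<Prod>(a, b)\<in>pairs {1..n}. (mvar a - mvar b) ^ (2 * g))"
  unfolding vandermonde_sq_def pairs_def by (rule prod.cong) auto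

lemma deg_on_ge_vandermonde_sq:
  assumes "i \<le> n"
  shows "deg_on_ge {1..i} (int g * int i * (int i - 1)) (vandermonde_sq n g)"
proof -
  have "{a\<in>{1..n}. a \<in> {1..i}} = {1..i}"
    using assms by auto
  then have "count_into (\<lambda>a. a) {1..i} {1..n} = int i"
    by (simp add: count_into_def)
  then show ?thesis
    using deg_on_ge_prod_pairs[where \<sigma>="\<lambda>a. a" and A="{1..n}" and S="{1..i}" and r=g] by (simp add: vandermonde_sq_pairs)
qed

lemma deg_on_le_vandermonde_sq:
  assumes "1 \<le> i" "i \<le> n"
  shows "deg_on_le {i..n} (int g * (int n - int i + 1) * (int n + int i - 2)) (vandermonde_sq n g)"
proof -
  have "{a\<in>{1..n}. a \<in> {i..n}} = {i..n}"
    using assms by auto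
  then have "count_into (\<lambda>a. a) {i..n} {1..n} = int n - int i + 1"
    using assms by (simp add: count_into_def of_nat_diff)
  moreover have "int n * (int n - 1) - (int n - (int n - int i + 1)) * (int n - (int n - int i + 1) - 1)
      = (int n - int i + 1) * (int n + int i - 2)"
    by (simp add: algebra_simps)
  ultimately show ?thesis
    using deg_on_le_prod_pairs[where \<sigma>="\<lambda>a. a" and A="{1..n}" and S="{i..n}" and r=g] by (simp add: vandermonde_sq_pairs mult.assoc)
qed

lemma wdeg_on_ge_prod_mvar:
  assumes "finite A" "finite S"
  shows "wdeg_on_ge 0 S (count_into \<sigma> S A) (\<Prod>j\<in>A. [:mvar (\<sigma> j) - mconst 0:] * Z j)"
proof -
  have "wdeg_on_ge 0 S (\<Sum>j\<in>A. (if \<sigma> j \<in> S then 1 else 0) + 0) (\<Prod>j\<in>A. [:mvar (\<sigma> j) - mconst 0:] * Z j)"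
    by (intro wdeg_on_ge_prod wdeg_on_ge_mult wdeg_on_ge_const wdeg_on_ge_weight_0)
      (simp_all add: assms deg_on_ge_mvar)
  then show ?thesis
    by (simp add: sum_indicator_count_into assms)
qed

lemma wdeg_on_le_prod_mvar_X:
  assumes "finite A" "finite S"
  shows "wdeg_on_le 1 S (count_into \<sigma> S A + int (card A))
    (\<Prod>j\<in>A. [:mvar (\<sigma> j) - mconst a:] * ([:mvar (\<sigma> j):] - [:0, 1:]))"
proof -
  have "wdeg_on_le 1 S 1 ([:mvar v:] - [:0, 1:])" for v
    by (intro wdeg_on_le_diff wdeg_on_le_X wdeg_on_le_const deg_on_le_mono[OF deg_on_le_mvar[OF assms(2)]]) auto
  then have "wdeg_on_le 1 S (\<Sum>j\<in>A. (if \<sigma> j \<in> S then 1 else 0) + 1)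
      (\<Prod>j\<in>A. [:mvar (\<sigma> j) - mconst a:] * ([:mvar (\<sigma> j):] - [:0, 1:]))"
    by (intro wdeg_on_le_prod wdeg_on_le_mult wdeg_on_le_const deg_on_le_mvar_diff_mconst assms)
  then show ?thesis
    by (simp add: sum.distrib sum_indicator_count_into assms)
qed

lemma wdeg_on_le_prod_mvar_mvar:
  assumes "finite A" "finite S"
  shows "wdeg_on_le 1 S (2 * count_into \<sigma> S A) (\<Prod>j\<in>A. [:mvar (\<sigma> j) - mconst a:] * [:mvar (\<sigma> j) - mconst b:])"
proof -
  have "(\<Sum>j\<in>A. (if \<sigma> j \<in> S then 1 else 0) + (if \<sigma> j \<in> S then 1 else 0)) = 2 * count_into \<sigma> S A"
    by (simp only: sum.distrib sum_indicator_count_into[OF assms(1)] mult_2)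
  moreover have "wdeg_on_le 1 S (\<Sum>j\<in>A. (if \<sigma> j \<in> S then 1 else 0) + (if \<sigma> j \<in> S then 1 else 0))
      (\<Prod>j\<in>A. [:mvar (\<sigma> j) - mconst a:] * [:mvar (\<sigma> j) - mconst b:])"
    by (intro wdeg_on_le_prod wdeg_on_le_mult wdeg_on_le_const deg_on_le_mvar_diff_mconst assms)
  ultimately show ?thesis
    by (simp only:)
qed

lemma sum_split_atLeastAtMost:
  fixes a b c :: nat
  assumes "a \<le> b" "b \<le> c"
  shows "(\<Sum>q\<in>{a+1..b}. f q) + (\<Sum>q\<in>{b+1..c}. f q) = (\<Sum>q\<in>{a+1..c}. f q)"
proof -
  have "{a+1..c} = {a+1..b} \<union> {b+1..c}"
    using assms by auto
  then show ?thesis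
    by (simp add: sum.union_disjoint)
qed

lemma mult_pred_nonneg_int: "0 \<le> (x::int) * (x - 1)"
  by (cases "x \<le> 0") (simp_all add: mult_nonpos_nonpos)

lemma square_sub_even_ge: "- (a * a) \<le> (d::int) * d - 2 * a * d"
  using zero_le_square[of "d - a"] by (simp add: algebra_simps)

lemma square_sub_odd_ge: "- (a * (a + 1)) \<le> (d::int) * d - (2 * a + 1) * d"
  using mult_pred_nonneg_int[of "d - a"] by (simp add: algebra_simps)

lemma sum_mult_pred_gt:
  fixes c :: "'a \<Rightarrow> int"
  assumes "finite I" "(\<Sum>q\<in>I. c q) = i" "p * int (card I) < i" "0 \<le> p"
  shows "i * (p - 1) < (\<Sum>q\<in>I. c q * (c q - 1))"
proof -
  have "(\<Sum>q\<in>I. 2 * p * c q - p * (p + 1)) \<le> (\<Sum>q\<in>I. c q * (c q - 1))"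
  proof (rule sum_mono)
    fix q
    show "2 * p * c q - p * (p + 1) \<le> c q * (c q - 1)"
      using square_sub_odd_ge[of p "c q"] by (simp add: algebra_simps)
  qed
  moreover have "(\<Sum>q\<in>I. 2 * p * c q - p * (p + 1)) = 2 * p * i - int (card I) * (p * (p + 1))"
    using assms(2) by (simp add: sum_subtractf flip: sum_distrib_left)
  moreover have "0 < (p + 1) * (i - p * int (card I))"
    using assms(3,4) by simp
  ultimately show ?thesis
    by (simp add: algebra_simps)
qed

lemma sum_mult_pred_plus_gt:
  fixes c :: "'a \<Rightarrow> int"
  assumes "finite I" "Q \<subseteq> I" "(\<Sum>q\<in>I. c q) = i" "(p + 1) * int (card I) - int (card Q) < i" "0 \<le> p"
  shows "i * p < (\<Sum>q\<in>I. c q * (c q - 1)) + (\<Sum>q\<in>Q. c q)"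
proof -
  have "(\<Sum>q\<in>I. (2 * p + 1) * c q - (p + 1) * (p + 1) + (if q \<in> Q then p + 1 else 0))
      \<le> (\<Sum>q\<in>I. c q * (c q - 1) + (if q \<in> Q then c q else 0))"
  proof (rule sum_mono)
    fix q
    show "(2 * p + 1) * c q - (p + 1) * (p + 1) + (if q \<in> Q then p + 1 else 0)
        \<le> c q * (c q - 1) + (if q \<in> Q then c q else 0)"
      using square_sub_odd_ge[of p "c q"] square_sub_even_ge[of "p + 1" "c q"] by (simp add: algebra_simps)
  qed
  moreover have restrict: "(\<Sum>q\<in>I. if q \<in> Q then f q else 0) = (\<Sum>q\<in>Q. f q)" for f :: "'a \<Rightarrow> int"
    using sum.inter_restrict[OF assms(1), of f Q] assms(2) by (simp add: Int_absorb1)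
  then have "(\<Sum>q\<in>I. (2 * p + 1) * c q - (p + 1) * (p + 1) + (if q \<in> Q then p + 1 else 0))
      = (2 * p + 1) * i - int (card I) * ((p + 1) * (p + 1)) + int (card Q) * (p + 1)"
    using assms(3) by (simp add: sum.distrib sum_subtractf flip: sum_distrib_left)
  moreover have "(\<Sum>q\<in>I. c q * (c q - 1) + (if q \<in> Q then c q else 0))
      = (\<Sum>q\<in>I. c q * (c q - 1)) + (\<Sum>q\<in>Q. c q)"
    by (simp add: sum.distrib restrict)
  moreover have "0 < (p + 1) * (i - (p + 1) * int (card I) + int (card Q))"
    using assms(4,5) by simp
  moreover have "(p + 1) * (i - (p + 1) * int (card I) + int (card Q))
      = (2 * p + 1) * i - int (card I) * ((p + 1) * (p + 1)) + int (card Q) * (p + 1) - i * p"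
    by (simp add: algebra_simps)
  ultimately show ?thesis
    by linarith
qed

lemma sum_gain_le:
  fixes c :: "'a \<Rightarrow> int"
  assumes "\<And>d. - K \<le> d * d - (l + 1 - w) * d"
  shows "(\<Sum>q\<in>I. M * (M - 1) - (M - c q) * (M - c q - 1) + w * c q)
    \<le> int (card I) * (M * (M - 1) + w * M - l * M + K) + l * (\<Sum>q\<in>I. c q)"
proof -
  have "(\<Sum>q\<in>I. M * (M - 1) - (M - c q) * (M - c q - 1) + w * c q)
      \<le> (\<Sum>q\<in>I. (M * (M - 1) + w * M - l * M + K) + l * c q)"
  proof (rule sum_mono)
    fix q
    show "M * (M - 1) - (M - c q) * (M - c q - 1) + w * c q \<le> M * (M - 1) + w * M - l * M + K + l * c q"
      using assms[of "M - c q"] by (simp add: algebra_simps)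
  qed
  then show ?thesis
    by (simp add: sum.distrib sum_distrib_left)
qed

section \<open>Degree bounds for P\<close>

text \<open>The hypothesis \<open>k \<le> k1 + k3\<close> is \<open>k2 \<le> k\<close> for \<open>k1 + k2 + k3 = 2 k\<close>.\<close>

locale partition_setup =
  fixes N m k k1 k3 n :: nat and s :: "nat \<Rightarrow> nat set"
  assumes admissible: "admissible_partition N m k n s"
    and k1_le: "k1 \<le> k" and k3_le: "k3 \<le> k" and k_le: "k \<le> N" and k_le_add: "k \<le> k1 + k3"
begin

lemma finite_group: "q \<in> {1..N} \<Longrightarrow> finite (s q)"
  and card_group: "q \<in> {1..N} \<Longrightarrow> card (s q) = (if q \<le> k then m - 1 else m)"
  using admissible by (auto simp: admissible_partition_def)

lemma groups_disjoint: "q \<in> {1..N} \<Longrightarrow> q' \<in> {1..N} \<Longrightarrow> q \<noteq> q' \<Longrightarrow> s q \<inter> s q' = {}"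
  using admissible by (auto simp: admissible_partition_def)

lemma UN_groups: "(\<Union>q\<in>{1..N}. s q) = {1..n}"
  using admissible by (auto simp: admissible_partition_def)

lemma finite_UN_groups: "1 \<le> a \<Longrightarrow> b \<le> N \<Longrightarrow> finite (\<Union>q\<in>{a..b}. s q)"
  using finite_group by auto

lemma card_UN_groups:
  assumes "1 \<le> a" "b \<le> k"
  shows "card (\<Union>q\<in>{a..b}. s q) = (b + 1 - a) * (m - 1)"
proof -
  have "card (\<Union>q\<in>{a..b}. s q) = (\<Sum>q\<in>{a..b}. card (s q))"
    using assms k_le finite_group groups_disjoint by (intro card_UN_disjoint) auto
  also have "\<dots> = (\<Sum>q\<in>{a..b}. m - 1)"
    using assms k_le card_group by (intro sum.cong) auto
  finally show ?thesis
    by simp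
qed

lemma count_into_UN_groups:
  assumes "1 \<le> a" "b \<le> N"
  shows "count_into \<sigma> S (\<Union>q\<in>{a..b}. s q) = (\<Sum>q\<in>{a..b}. count_into \<sigma> S (s q))"
proof -
  have "{x \<in> (\<Union>q\<in>{a..b}. s q). \<sigma> x \<in> S} = (\<Union>q\<in>{a..b}. {x\<in>s q. \<sigma> x \<in> S})"
    by auto
  moreover have "card (\<Union>q\<in>{a..b}. {x\<in>s q. \<sigma> x \<in> S}) = (\<Sum>q\<in>{a..b}. card {x\<in>s q. \<sigma> x \<in> S})"
  proof (rule card_UN_disjoint)
    show "\<forall>q\<in>{a..b}. finite {x \<in> s q. \<sigma> x \<in> S}"
      using assms finite_group by auto
    show "\<forall>q\<in>{a..b}. \<forall>q'\<in>{a..b}. q \<noteq> q' \<longrightarrow> {x \<in> s q. \<sigma> x \<in> S} \<inter> {x \<in> s q'. \<sigma> x \<in> S} = {}"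
    proof (intro ballI impI)
      fix q q' assume "q \<in> {a..b}" "q' \<in> {a..b}" "q \<noteq> q'"
      then have "s q \<inter> s q' = {}"
        using assms by (intro groups_disjoint) auto
      then show "{x \<in> s q. \<sigma> x \<in> S} \<inter> {x \<in> s q'. \<sigma> x \<in> S} = {}"
        by blast
    qed
  qed simp
  ultimately show ?thesis
    by (simp add: count_into_def)
qed

lemma sum_count_into_groups:
  assumes "\<sigma> permutes {1..n}" "S \<subseteq> {1..n}"
  shows "(\<Sum>q\<in>{1..N}. count_into \<sigma> S (s q)) = int (card S)"
proof -
  have "\<sigma> ` {a\<in>{1..n}. \<sigma> a \<in> S} = S"
  proof
    show "S \<subseteq> \<sigma> ` {a\<in>{1..n}. \<sigma> a \<in> S}"
    proof
      fix y assume "y \<in> S"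
      then obtain a where "a \<in> {1..n}" "y = \<sigma> a"
        using assms(2) permutes_image[OF assms(1)] by blast
      with \<open>y \<in> S\<close> show "y \<in> \<sigma> ` {a\<in>{1..n}. \<sigma> a \<in> S}"
        by blast
    qed
  qed auto
  moreover have "inj_on \<sigma> {a\<in>{1..n}. \<sigma> a \<in> S}"
    using permutes_inj[OF assms(1)] by (auto simp: inj_on_def inj_def)
  ultimately have "count_into \<sigma> S {1..n} = int (card S)"
    unfolding count_into_def by (metis card_image)
  then show ?thesis
    using count_into_UN_groups[of 1 N \<sigma> S] unfolding UN_groups by simp
qed

lemma card_UN_groups_k3:
  "card (\<Union>q\<in>{1..k-k1}. s q) + card (\<Union>q\<in>{k-k1+1..k3}. s q) = (m - 1) * k3"
proof -
  have "card (\<Union>q\<in>{1..k-k1}. s q) + card (\<Union>q\<in>{k-k1+1..k3}. s q) = (k - k1) * (m - 1) + (k3 - (k - k1)) * (m - 1)"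
    using card_UN_groups[of 1 "k - k1"] card_UN_groups[of "k - k1 + 1" k3] k1_le k3_le by simp
  also have "\<dots> = (m - 1) * k3"
    using k_le_add add_mult_distrib[of "k - k1" "k3 - (k - k1)" "m - 1"] by (simp add: mult.commute)
  finally show ?thesis .
qed

definition p_x3 :: "(nat \<Rightarrow> mpoly) \<Rightarrow> mpoly poly" where
  "p_x3 f =
     [:\<Prod>q\<in>{1..N}. \<Prod>(i, j)\<in>pairs (s q). (f i - f j) ^ 2:] *
     (\<Prod>j\<in>(\<Union>q\<in>{1..k-k1}. s q). [:f j - mconst 1:] * ([:f j:] - [:0, 1:])) *
     (\<Prod>j\<in>(\<Union>q\<in>{k-k1+1..k3}. s q). [:f j - mconst 0:] * ([:f j:] - [:0, 1:])) *
     (\<Prod>j\<in>(\<Union>q\<in>{k3+1..k}. s q). [:f j - mconst 0:] * [:f j - mconst 1:])"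

definition P3_x3 :: "mpoly poly" where
  "P3_x3 = smult (mconst (inverse (Lambda_m N m k n))) (\<Sum>\<sigma> | \<sigma> permutes {1..n}. p_x3 (\<lambda>i. mvar (\<sigma> i)))"

lemma poly_p_x3: "poly (p_x3 f) (mconst x3) = p_poly N k k1 k3 s 0 1 x3 f"
proof -
  have "poly [:a:] y = a" and "poly [:0, 1:] y = y" for a y :: mpoly
    by simp_all
  then show ?thesis
    by (simp only: p_x3_def p_poly_def pairs_def poly_mult poly_prod poly_diff)
qed

lemma poly_P3_x3: "poly P3_x3 (mconst x3) = P3 N m k k1 k3 n s 0 1 x3"
  by (simp add: P3_x3_def P3_def poly_sum poly_p_x3)

lemma degree_p_x3: "degree (p_x3 f) \<le> (m - 1) * k3"
proof -
  have linear: "degree (\<Prod>j\<in>U. [:f j - c:] * ([:f j:] - [:0, 1:])) \<le> 1 * card U" for U c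
    by (intro degree_prod_le order.trans[OF degree_mult_le]) (simp add: order.trans[OF degree_diff_le])
  have const: "degree (\<Prod>j\<in>U. [:f j - c:] * [:f j - c':]) \<le> 0 * card U" for U c c'
    by (rule degree_prod_le) (simp add: mult_to_poly)
  have mult4: "degree (P0 * P1 * P2 * P3) \<le> degree P0 + degree P1 + degree P2 + degree P3"
    for P0 P1 P2 P3 :: "mpoly poly"
    by (meson add_mono degree_mult_le order_trans order_refl)
  have "degree (p_x3 f) \<le> 0 + 1 * card (\<Union>q\<in>{1..k-k1}. s q) + 1 * card (\<Union>q\<in>{k-k1+1..k3}. s q)
      + 0 * card (\<Union>q\<in>{k3+1..k}. s q)"
    unfolding p_x3_def by (rule order.trans[OF mult4]) (intro add_mono linear const; simp)
  then show ?thesis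
    using card_UN_groups_k3 by simp
qed

lemma degree_P3_x3: "degree P3_x3 \<le> (m - 1) * k3"
  unfolding P3_x3_def
  by (intro order.trans[OF degree_smult_le] degree_sum_le finite_permutations finite_atLeastAtMost degree_p_x3)

lemma P_poly_eq: "P_poly N m k k1 k3 n s = mconst ((-1) ^ ((m - 1) * k1)) * coeff P3_x3 ((m - 1) * k3)"
proof -
  have "Lim at_top (\<lambda>x3. Poly_Mapping.lookup (P3 N m k k1 k3 n s 0 1 x3) \<alpha> / x3 ^ ((m - 1) * k3))
      = Poly_Mapping.lookup (coeff P3_x3 ((m - 1) * k3)) \<alpha>" for \<alpha>
    using tendsto_lookup_poly_mconst[OF degree_P3_x3, of \<alpha>] unfolding poly_P3_x3
    by (intro tendsto_Lim) simp_all
  then have "P_poly N m k k1 k3 n s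
      = Abs_poly_mapping (\<lambda>\<alpha>. (-1) ^ ((m - 1) * k1) * Poly_Mapping.lookup (coeff P3_x3 ((m - 1) * k3)) \<alpha>)"
    by (simp add: P_poly_def)
  also have "(\<lambda>\<alpha>. (-1) ^ ((m - 1) * k1) * Poly_Mapping.lookup (coeff P3_x3 ((m - 1) * k3)) \<alpha>)
      = Poly_Mapping.lookup (mconst ((-1) ^ ((m - 1) * k1)) * coeff P3_x3 ((m - 1) * k3))"
    by (simp add: fun_eq_iff lookup_mconst_mult)
  finally show ?thesis
    by simp
qed

text \<open>Here \<open>c q\<close> is the number of variables of group \<open>q\<close> that a permutation sends into \<open>S\<close>, and
  \<open>M (M - 1) - (M - c) (M - c - 1)\<close> is twice the number of pairs of a group of size \<open>M\<close> that meet \<open>S\<close>.\<close>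

definition deg_lower_bound :: "(nat \<Rightarrow> int) \<Rightarrow> int" where
  "deg_lower_bound c = (\<Sum>q\<in>{1..N}. c q * (c q - 1)) + (\<Sum>q\<in>{k-k1+1..k}. c q)"

definition deg_upper_bound :: "(nat \<Rightarrow> int) \<Rightarrow> int" where
  "deg_upper_bound c =
     (\<Sum>q\<in>{1..N}. int (card (s q)) * (int (card (s q)) - 1) - (int (card (s q)) - c q) * (int (card (s q)) - c q - 1))
     + (\<Sum>q\<in>{1..k3}. c q) + (\<Sum>q\<in>{k3+1..k}. 2 * c q)"

lemma wdeg_on_ge_p_x3:
  fixes \<sigma> :: "nat \<Rightarrow> nat"
  assumes "finite S"
  defines "c \<equiv> \<lambda>q. count_into \<sigma> S (s q)"
  shows "wdeg_on_ge 0 S (deg_lower_bound c) (p_x3 (\<lambda>i. mvar (\<sigma> i)))"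
proof -
  have "deg_on_ge S (c q * (c q - 1)) (\<Prod>(i, j)\<in>pairs (s q). (mvar (\<sigma> i) - mvar (\<sigma> j)) ^ 2)"
    if "q \<in> {1..N}" for q
    using deg_on_ge_prod_pairs[where r=1, OF finite_group[OF that] assms(1)] by (simp add: c_def)
  then have "wdeg_on_ge 0 S (\<Sum>q\<in>{1..N}. c q * (c q - 1))
      [:\<Prod>q\<in>{1..N}. \<Prod>(i, j)\<in>pairs (s q). (mvar (\<sigma> i) - mvar (\<sigma> j)) ^ 2:]"
    by (intro wdeg_on_ge_const deg_on_ge_prod) simp_all
  then have "wdeg_on_ge 0 S ((\<Sum>q\<in>{1..N}. c q * (c q - 1)) + 0
      + count_into \<sigma> S (\<Union>q\<in>{k-k1+1..k3}. s q) + count_into \<sigma> S (\<Union>q\<in>{k3+1..k}. s q))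
      (p_x3 (\<lambda>i. mvar (\<sigma> i)))"
    unfolding p_x3_def using k_le k3_le
    by (intro wdeg_on_ge_mult wdeg_on_ge_weight_0 wdeg_on_ge_prod_mvar finite_UN_groups assms) auto
  moreover have "count_into \<sigma> S (\<Union>q\<in>{k-k1+1..k3}. s q) + count_into \<sigma> S (\<Union>q\<in>{k3+1..k}. s q)
      = (\<Sum>q\<in>{k-k1+1..k}. c q)"
    using k_le k3_le k_le_add sum_split_atLeastAtMost[of "k - k1" k3 k c]
    by (simp add: count_into_UN_groups c_def)
  ultimately show ?thesis
    by (simp add: deg_lower_bound_def add.assoc)
qed

lemma wdeg_on_le_p_x3:
  fixes \<sigma> :: "nat \<Rightarrow> nat"
  assumes "finite S"
  defines "c \<equiv> \<lambda>q. count_into \<sigma> S (s q)"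
  shows "wdeg_on_le 1 S (deg_upper_bound c + int ((m - 1) * k3)) (p_x3 (\<lambda>i. mvar (\<sigma> i)))"
proof -
  let ?U = "\<lambda>Q. \<Union>q\<in>Q. s q"
  define M where "M = (\<lambda>q. int (card (s q)))"
  have "deg_on_le S (M q * (M q - 1) - (M q - c q) * (M q - c q - 1))
      (\<Prod>(i, j)\<in>pairs (s q). (mvar (\<sigma> i) - mvar (\<sigma> j)) ^ 2)" if "q \<in> {1..N}" for q
    using deg_on_le_prod_pairs[where r=1, OF finite_group[OF that] assms(1)] by (simp add: c_def M_def)
  then have "wdeg_on_le 1 S (\<Sum>q\<in>{1..N}. M q * (M q - 1) - (M q - c q) * (M q - c q - 1))
      [:\<Prod>q\<in>{1..N}. \<Prod>(i, j)\<in>pairs (s q). (mvar (\<sigma> i) - mvar (\<sigma> j)) ^ 2:]"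
    by (intro wdeg_on_le_const deg_on_le_prod) simp_all
  then have bound: "wdeg_on_le 1 S ((\<Sum>q\<in>{1..N}. M q * (M q - 1) - (M q - c q) * (M q - c q - 1))
      + (count_into \<sigma> S (?U {1..k-k1}) + int (card (?U {1..k-k1})))
      + (count_into \<sigma> S (?U {k-k1+1..k3}) + int (card (?U {k-k1+1..k3})))
      + 2 * count_into \<sigma> S (?U {k3+1..k})) (p_x3 (\<lambda>i. mvar (\<sigma> i)))"
    unfolding p_x3_def using k_le k3_le
    by (intro wdeg_on_le_mult wdeg_on_le_prod_mvar_X wdeg_on_le_prod_mvar_mvar finite_UN_groups assms) auto
  have "count_into \<sigma> S (?U {1..k-k1}) + count_into \<sigma> S (?U {k-k1+1..k3}) = (\<Sum>q\<in>{1..k3}. c q)"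
    using k_le k3_le k_le_add sum_split_atLeastAtMost[of 0 "k - k1" k3 c]
    by (simp add: count_into_UN_groups c_def)
  moreover have "int (card (?U {1..k-k1})) + int (card (?U {k-k1+1..k3})) = int ((m - 1) * k3)"
    using card_UN_groups_k3 by (metis of_nat_add)
  moreover have "2 * count_into \<sigma> S (?U {k3+1..k}) = (\<Sum>q\<in>{k3+1..k}. 2 * c q)"
    using k_le by (simp add: count_into_UN_groups c_def sum_distrib_left)
  ultimately show ?thesis
    unfolding deg_upper_bound_def by (intro wdeg_on_le_mono[OF bound[unfolded M_def]]) linarith
qed

lemma deg_on_ge_P_poly:
  assumes S: "S \<subseteq> {1..n}"
    and L: "\<And>c. (\<And>q. 0 \<le> c q) \<Longrightarrow> (\<Sum>q\<in>{1..N}. c q) = int (card S) \<Longrightarrow> L \<le> deg_lower_bound c"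
  shows "deg_on_ge S L (P_poly N m k k1 k3 n s)"
proof -
  have fin: "finite S"
    using S by (rule finite_subset) simp
  have "wdeg_on_ge 0 S L (p_x3 (\<lambda>i. mvar (\<sigma> i)))" if "\<sigma> permutes {1..n}" for \<sigma>
  proof (rule wdeg_on_ge_mono[OF wdeg_on_ge_p_x3[OF fin]])
    show "L \<le> deg_lower_bound (\<lambda>q. count_into \<sigma> S (s q))"
      by (rule L, simp add: count_into_def, rule sum_count_into_groups[OF that S])
  qed
  then have "deg_on_ge S L (coeff P3_x3 ((m - 1) * k3))"
    unfolding P3_x3_def coeff_smult coeff_sum wdeg_on_ge_def
    by (intro deg_on_ge_mconst_mult deg_on_ge_sum) simp
  then show ?thesis
    unfolding P_poly_eq by (rule deg_on_ge_mconst_mult)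
qed

lemma deg_on_le_P_poly:
  assumes S: "S \<subseteq> {1..n}"
    and U: "\<And>c. (\<Sum>q\<in>{1..N}. c q) = int (card S) \<Longrightarrow> deg_upper_bound c \<le> U"
  shows "deg_on_le S U (P_poly N m k k1 k3 n s)"
proof -
  have fin: "finite S"
    using S by (rule finite_subset) simp
  have "wdeg_on_le 1 S (U + int ((m - 1) * k3)) (p_x3 (\<lambda>i. mvar (\<sigma> i)))" if "\<sigma> permutes {1..n}" for \<sigma>
  proof (rule wdeg_on_le_mono[OF wdeg_on_le_p_x3[OF fin]])
    show "deg_upper_bound (\<lambda>q. count_into \<sigma> S (s q)) + int ((m - 1) * k3) \<le> U + int ((m - 1) * k3)"
      using U sum_count_into_groups[OF that S] by simp
  qed
  then have "deg_on_le S U (coeff (p_x3 (\<lambda>i. mvar (\<sigma> i))) ((m - 1) * k3))" if "\<sigma> permutes {1..n}" for \<sigma>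
    using that unfolding wdeg_on_le_def by (metis add_diff_cancel_right' mult_1)
  then have "deg_on_le S U (coeff P3_x3 ((m - 1) * k3))"
    unfolding P3_x3_def coeff_smult coeff_sum
    by (intro deg_on_le_mconst_mult deg_on_le_sum) simp
  then show ?thesis
    unfolding P_poly_eq by (rule deg_on_le_mconst_mult)
qed

lemma sum_gain_groups_le:
  fixes c :: "nat \<Rightarrow> int" and l K0 K1 K2 :: int
  assumes h1: "\<And>d. - K1 \<le> d * d - l * d" and h2: "\<And>d. - K2 \<le> d * d - (l - 1) * d"
    and h0: "\<And>d. - K0 \<le> d * d - (l + 1) * d"
  defines "M' \<equiv> int (m - 1)"
  shows "deg_upper_bound c
    \<le> int k3 * (M' * (M' - 1) + M' - l * M' + K1) + int (k - k3) * (M' * (M' - 1) + 2 * M' - l * M' + K2)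
      + int (N - k) * (int m * (int m - 1) - l * int m + K0) + l * (\<Sum>q\<in>{1..N}. c q)"
proof -
  define M where "M q = int (card (s q))" for q
  define G where "G q = M q * (M q - 1) - (M q - c q) * (M q - c q - 1)" for q
  have split: "(\<Sum>q\<in>{1..N}. f q) = (\<Sum>q\<in>{1..k3}. f q) + (\<Sum>q\<in>{k3+1..k}. f q) + (\<Sum>q\<in>{k+1..N}. f q)"
    for f :: "nat \<Rightarrow> int"
    using sum_split_atLeastAtMost[of 0 k3 k f] sum_split_atLeastAtMost[of 0 k N f] k3_le k_le by simp
  have "(\<Sum>q\<in>{1..k3}. G q + 1 * c q)
      = (\<Sum>q\<in>{1..k3}. M' * (M' - 1) - (M' - c q) * (M' - c q - 1) + 1 * c q)"
    using k3_le k_le by (intro sum.cong) (auto simp: G_def M_def M'_def card_group)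
  then have r1: "(\<Sum>q\<in>{1..k3}. G q) + (\<Sum>q\<in>{1..k3}. c q)
      \<le> int k3 * (M' * (M' - 1) + M' - l * M' + K1) + l * (\<Sum>q\<in>{1..k3}. c q)"
    using sum_gain_le[of K1 l 1 M' c "{1..k3}"] h1 by (simp add: sum.distrib)
  have "(\<Sum>q\<in>{k3+1..k}. G q + 2 * c q)
      = (\<Sum>q\<in>{k3+1..k}. M' * (M' - 1) - (M' - c q) * (M' - c q - 1) + 2 * c q)"
    using k_le by (intro sum.cong) (auto simp: G_def M_def M'_def card_group)
  then have r2: "(\<Sum>q\<in>{k3+1..k}. G q) + (\<Sum>q\<in>{k3+1..k}. 2 * c q)
      \<le> int (k - k3) * (M' * (M' - 1) + 2 * M' - l * M' + K2) + l * (\<Sum>q\<in>{k3+1..k}. c q)"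
    using sum_gain_le[of K2 l 2 M' c "{k3+1..k}"] h2 by (simp add: sum.distrib)
  have "(\<Sum>q\<in>{k+1..N}. G q + 0 * c q)
      = (\<Sum>q\<in>{k+1..N}. int m * (int m - 1) - (int m - c q) * (int m - c q - 1) + 0 * c q)"
    by (intro sum.cong) (auto simp: G_def M_def card_group)
  then have r0: "(\<Sum>q\<in>{k+1..N}. G q) \<le> int (N - k) * (int m * (int m - 1) - l * int m + K0) + l * (\<Sum>q\<in>{k+1..N}. c q)"
    using sum_gain_le[of K0 l 0 "int m" c "{k+1..N}"] h0 by simp
  have "l * (\<Sum>q\<in>{1..N}. c q) = l * (\<Sum>q\<in>{1..k3}. c q) + l * (\<Sum>q\<in>{k3+1..k}. c q) + l * (\<Sum>q\<in>{k+1..N}. c q)"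
    using split[of c] by (simp add: distrib_left)
  with r1 r2 r0 split[of G] show ?thesis
    unfolding deg_upper_bound_def G_def M_def by linarith
qed

end

section \<open>Bounds on the exponents\<close>

locale nonvanishing_monomial = partition_setup +
  fixes g :: nat and \<nu> :: "nat \<Rightarrow>\<^sub>0 nat"
  assumes m_pos: "1 \<le> m" and n_eq: "n = m * N - k"
    and sorted: "mono_on {1..n} (Poly_Mapping.lookup \<nu>)"
    and nonzero: "Poly_Mapping.lookup (vandermonde_sq n g * P_poly N m k k1 k3 n s) \<nu> \<noteq> 0"
begin

lemma int_n_eq: "int n = int m * int N - int k"
proof -
  have "k \<le> m * N"
    using m_pos k_le by (metis le_trans mult_1 mult_le_mono1)
  then show ?thesis
    using n_eq by (simp add: of_nat_diff)
qed

lemma index_le_n: "i \<le> p * N + (N - k) \<Longrightarrow> p + 1 \<le> m \<Longrightarrow> i \<le> n"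
  using mult_le_mono1[of "p + 1" m N] k_le n_eq by simp

lemma lower_bound_exponent:
  assumes i: "1 \<le> i" "i \<le> n"
    and count_bound: "\<And>c. (\<And>q. 0 \<le> c q) \<Longrightarrow> (\<Sum>q\<in>{1..N}. c q) = int i \<Longrightarrow> int i * (B - 1) < deg_lower_bound c"
  shows "B + (int i - 1) * int g \<le> int (Poly_Mapping.lookup \<nu> i)"
proof -
  have "deg_on_ge {1..i} (int g * int i * (int i - 1) + (int i * (B - 1) + 1))
      (vandermonde_sq n g * P_poly N m k k1 k3 n s)"
  proof (rule deg_on_ge_mult[OF deg_on_ge_vandermonde_sq[OF i(2)] deg_on_ge_P_poly])
    show "{1..i} \<subseteq> {1..n}"
      using i by auto
    fix c :: "nat \<Rightarrow> int"
    assume "\<And>q. 0 \<le> c q" "(\<Sum>q\<in>{1..N}. c q) = int (card {1..i})"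
    then have "int i * (B - 1) < deg_lower_bound c"
      by (intro count_bound) simp_all
    then show "int i * (B - 1) + 1 \<le> deg_lower_bound c"
      by simp
  qed
  then have "int g * int i * (int i - 1) + (int i * (B - 1) + 1) \<le> int i * int (Poly_Mapping.lookup \<nu> i)"
    using nonzero deg_on_atLeastAtMost_le[OF sorted i(2)] by (force simp: deg_on_ge_def in_keys_iff)
  then have "int i * (B + (int i - 1) * int g - 1) < int i * int (Poly_Mapping.lookup \<nu> i)"
    by (simp add: algebra_simps)
  then show ?thesis
    using i by (simp add: mult_less_cancel_left)
qed

lemma upper_bound_exponent:
  assumes i: "1 \<le> i" "i \<le> n"
    and count_bound: "\<And>c. (\<Sum>q\<in>{1..N}. c q) = int n - int i + 1 \<Longrightarrow> deg_upper_bound c < (int n - int i + 1) * (B + 1)"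
  shows "int (Poly_Mapping.lookup \<nu> i) \<le> B + (int n + int i - 2) * int g"
proof -
  let ?t = "int n - int i + 1"
  have "deg_on_le {i..n} (int g * ?t * (int n + int i - 2) + (?t * (B + 1) - 1))
      (vandermonde_sq n g * P_poly N m k k1 k3 n s)"
  proof (rule deg_on_le_mult[OF deg_on_le_vandermonde_sq[OF i] deg_on_le_P_poly])
    show "{i..n} \<subseteq> {1..n}"
      using i by auto
    fix c :: "nat \<Rightarrow> int"
    assume "(\<Sum>q\<in>{1..N}. c q) = int (card {i..n})"
    then have "(\<Sum>q\<in>{1..N}. c q) = ?t"
      using i by (simp add: of_nat_diff)
    then show "deg_upper_bound c \<le> ?t * (B + 1) - 1"
      using count_bound by force
  qed
  then have "?t * int (Poly_Mapping.lookup \<nu> i) \<le> int g * ?t * (int n + int i - 2) + (?t * (B + 1) - 1)"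
    using nonzero atLeastAtMost_le_deg_on[OF sorted i(1)] by (force simp: deg_on_le_def in_keys_iff)
  then have "?t * int (Poly_Mapping.lookup \<nu> i) < ?t * (B + (int n + int i - 2) * int g + 1)"
    by (simp add: algebra_simps)
  then show ?thesis
    using i by (simp add: mult_less_cancel_left)
qed

lemma exponent_ge:
  assumes "p * N < i" "i \<le> n"
  shows "int p + (int i - 1) * int g \<le> int (Poly_Mapping.lookup \<nu> i)"
proof (rule lower_bound_exponent[OF _ assms(2)])
  show "1 \<le> i"
    using assms(1) by simp
  fix c :: "nat \<Rightarrow> int"
  assume c: "\<And>q. 0 \<le> c q" "(\<Sum>q\<in>{1..N}. c q) = int i"
  have "int i * (int p - 1) < (\<Sum>q\<in>{1..N}. c q * (c q - 1))"
    using assms(1) by (intro sum_mult_pred_gt c(2)) (simp_all flip: of_nat_mult)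
  moreover have "0 \<le> (\<Sum>q\<in>{k-k1+1..k}. c q)"
    using c(1) by (simp add: sum_nonneg)
  ultimately show "int i * (int p - 1) < deg_lower_bound c"
    unfolding deg_lower_bound_def by linarith
qed

lemma exponent_ge_Suc:
  assumes "p * N + (N - k1) < i" "i \<le> n"
  shows "int p + 1 + (int i - 1) * int g \<le> int (Poly_Mapping.lookup \<nu> i)"
proof (rule lower_bound_exponent[OF _ assms(2)])
  show "1 \<le> i"
    using assms(1) by simp
  fix c :: "nat \<Rightarrow> int"
  assume "(\<Sum>q\<in>{1..N}. c q) = int i"
  moreover have "(int p + 1) * int (card {1..N}) - int (card {k-k1+1..k}) < int i"
    using assms(1) k1_le k_le by (simp add: algebra_simps of_nat_diff flip: of_nat_mult of_nat_add)
  ultimately have "int i * int p < (\<Sum>q\<in>{1..N}. c q * (c q - 1)) + (\<Sum>q\<in>{k-k1+1..k}. c q)"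
    using k_le by (intro sum_mult_pred_plus_gt) auto
  then show "int i * (int p + 1 - 1) < deg_lower_bound c"
    by (simp add: deg_lower_bound_def)
qed

lemma exponent_le:
  assumes "1 \<le> i" "i \<le> p * N + (N - k)" "p + 1 \<le> m"
  shows "int (Poly_Mapping.lookup \<nu> i) \<le> int m + int p - 1 + (int n + int i - 2) * int g"
proof (rule upper_bound_exponent[OF assms(1)])
  show "i \<le> n"
    using assms(2,3) by (rule index_le_n)
  define P M' j where "P = int p" and "M' = int (m - 1)" and "j = int i - int p * int N"
  have "int i \<le> int (p * N + (N - k))"
    using assms(2) by (simp only: of_nat_le_iff)
  then have j: "j \<le> int N - int k"
    using k_le by (simp add: j_def of_nat_diff)
  fix c :: "nat \<Rightarrow> int"
  assume sum_c: "(\<Sum>q\<in>{1..N}. c q) = int n - int i + 1"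
  have h1: "- (P * P) \<le> d * d - 2 * P * d" for d
    by (rule square_sub_even_ge)
  have h2: "- ((P - 1) * P) \<le> d * d - (2 * P - 1) * d" for d
    using square_sub_odd_ge[of "P - 1" d] by (simp add: algebra_simps)
  have h0: "- (P * (P + 1)) \<le> d * d - (2 * P + 1) * d" for d
    by (rule square_sub_odd_ge)
  have "deg_upper_bound c \<le> int k3 * (M' * (M' - 1) + M' - 2 * P * M' + P * P)
      + int (k - k3) * (M' * (M' - 1) + 2 * M' - 2 * P * M' + (P - 1) * P)
      + int (N - k) * (int m * (int m - 1) - 2 * P * int m + P * (P + 1)) + 2 * P * (int n - int i + 1)"
    using sum_gain_groups_le[OF h1 h2 h0, of c] unfolding sum_c M'_def .
  also have "\<dots> = (int n - int i + 1) * (int m + P)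
      - ((int m - P - 1) * (int N - int k - j + 1 + int k3) + (int N - int k - j + 1))"
    using m_pos k3_le k_le by (simp add: int_n_eq P_def M'_def j_def of_nat_diff algebra_simps)
  also have "\<dots> < (int n - int i + 1) * (int m + int p - 1 + 1)"
  proof -
    have "0 \<le> (int m - P - 1) * (int N - int k - j + 1 + int k3)"
      using assms(3) j by (intro mult_nonneg_nonneg) (simp_all add: P_def)
    with j show ?thesis
      by (simp add: P_def)
  qed
  finally show "deg_upper_bound c < (int n - int i + 1) * (int m + int p - 1 + 1)" .
qed

lemma exponent_le_k3:
  assumes "1 \<le> i" "i \<le> p * N + (N - k + k3)" "p + 2 \<le> m"
  shows "int (Poly_Mapping.lookup \<nu> i) \<le> int m + int p - 1 + (int n + int i - 2) * int g"
proof (rule upper_bound_exponent[OF assms(1)])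
  show "i \<le> n"
    using assms(2,3) k3_le k_le by (intro index_le_n[of i "p + 1"]) auto
  define P M' j where "P = int p" and "M' = int (m - 1)" and "j = int i - int p * int N"
  have "int i \<le> int (p * N + (N - k + k3))"
    using assms(2) by (simp only: of_nat_le_iff)
  then have j: "j \<le> int N - int k + int k3"
    using k_le by (simp add: j_def of_nat_diff)
  fix c :: "nat \<Rightarrow> int"
  assume sum_c: "(\<Sum>q\<in>{1..N}. c q) = int n - int i + 1"
  have h1: "- (P * (P + 1)) \<le> d * d - (2 * P + 1) * d" for d
    by (rule square_sub_odd_ge)
  have h2: "- (P * P) \<le> d * d - (2 * P + 1 - 1) * d" for d
    using square_sub_even_ge[of P d] by simp
  have h0: "- ((P + 1) * (P + 1)) \<le> d * d - (2 * P + 1 + 1) * d" for d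
    using square_sub_even_ge[of "P + 1" d] by (simp add: algebra_simps)
  have "deg_upper_bound c \<le> int k3 * (M' * (M' - 1) + M' - (2 * P + 1) * M' + P * (P + 1))
      + int (k - k3) * (M' * (M' - 1) + 2 * M' - (2 * P + 1) * M' + P * P)
      + int (N - k) * (int m * (int m - 1) - (2 * P + 1) * int m + (P + 1) * (P + 1))
      + (2 * P + 1) * (int n - int i + 1)"
    using sum_gain_groups_le[OF h1 h2 h0, of c] unfolding sum_c M'_def .
  also have "\<dots> = (int n - int i + 1) * (int m + P)
      - ((int m - P - 2) * (int N - int k + int k3 + 1 - j) + (int N - int k + int k3 + 1 - j))"
    using m_pos k3_le k_le by (simp add: int_n_eq P_def M'_def j_def of_nat_diff algebra_simps)
  also have "\<dots> < (int n - int i + 1) * (int m + int p - 1 + 1)"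
  proof -
    have "0 \<le> (int m - P - 2) * (int N - int k + int k3 + 1 - j)"
      using assms(3) j by (intro mult_nonneg_nonneg) (simp_all add: P_def)
    with j show ?thesis
      by (simp add: P_def)
  qed
  finally show "deg_upper_bound c < (int n - int i + 1) * (int m + int p - 1 + 1)" .
qed

lemma exponent_le_Suc:
  assumes "1 \<le> i" "i \<le> p * N + N" "p + 2 \<le> m"
  shows "int (Poly_Mapping.lookup \<nu> i) \<le> int m + int p + (int n + int i - 2) * int g"
proof (rule upper_bound_exponent[OF assms(1)])
  show "i \<le> n"
    using assms(2,3) by (intro index_le_n[of i "p + 1"]) auto
  define P M' j where "P = int p" and "M' = int (m - 1)" and "j = int i - int p * int N"
  have "int i \<le> int (p * N + N)"
    using assms(2) by (simp only: of_nat_le_iff)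
  then have j: "j \<le> int N"
    by (simp add: j_def)
  fix c :: "nat \<Rightarrow> int"
  assume sum_c: "(\<Sum>q\<in>{1..N}. c q) = int n - int i + 1"
  have h1: "- ((P + 1) * (P + 1)) \<le> d * d - (2 * P + 2) * d" for d
    using square_sub_even_ge[of "P + 1" d] by (simp add: algebra_simps)
  have h2: "- (P * (P + 1)) \<le> d * d - (2 * P + 2 - 1) * d" for d
    using square_sub_odd_ge[of P d] by (simp add: algebra_simps)
  have h0: "- ((P + 1) * (P + 2)) \<le> d * d - (2 * P + 2 + 1) * d" for d
    using square_sub_odd_ge[of "P + 1" d] by (simp add: algebra_simps)
  have "deg_upper_bound c \<le> int k3 * (M' * (M' - 1) + M' - (2 * P + 2) * M' + (P + 1) * (P + 1))
      + int (k - k3) * (M' * (M' - 1) + 2 * M' - (2 * P + 2) * M' + P * (P + 1))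
      + int (N - k) * (int m * (int m - 1) - (2 * P + 2) * int m + (P + 1) * (P + 2))
      + (2 * P + 2) * (int n - int i + 1)"
    using sum_gain_groups_le[OF h1 h2 h0, of c] unfolding sum_c M'_def .
  also have "\<dots> = (int n - int i + 1) * (int m + P + 1)
      - ((int m - P - 2) * (2 * int N - int k - j + int k3 + 1) + (2 * int N - int k - j + 1))"
    using m_pos k3_le k_le by (simp add: int_n_eq P_def M'_def j_def of_nat_diff algebra_simps)
  also have "\<dots> < (int n - int i + 1) * (int m + int p + 1)"
  proof -
    have "0 \<le> (int m - P - 2) * (2 * int N - int k - j + int k3 + 1)"
      using assms(3) j k_le by (intro mult_nonneg_nonneg) (simp_all add: P_def)
    with j k_le show ?thesis
      by (simp add: P_def)
  qed
  finally show "deg_upper_bound c < (int n - int i + 1) * (int m + int p + 1)" .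
qed

end

theorem proposition2:
  fixes N m k k1 k2 k3 n g :: nat and s :: "nat \<Rightarrow> nat set" and \<nu> :: "nat \<Rightarrow>\<^sub>0 nat"
  assumes "N \<ge> 1" and "m \<ge> 1"
    and "k1 + k2 + k3 = 2 * k" and "k1 \<le> k" and "k2 \<le> k" and "k3 \<le> k" and "k \<le> N"
    and "n = m * N - k"
    and "admissible_partition N m k n s"
    and sorted: "\<forall>i j. 1 \<le> i \<longrightarrow> i \<le> j \<longrightarrow> j \<le> n \<longrightarrow> Poly_Mapping.lookup \<nu> i \<le> Poly_Mapping.lookup \<nu> j"
    and "Poly_Mapping.lookup (vandermonde_sq n g * P_poly N m k k1 k3 n s) \<nu> \<noteq> 0"
  shows
    "(\<forall>p j. p + 2 \<le> m \<longrightarrow> 1 \<le> j \<longrightarrow> j \<le> N - k1 \<longrightarrow>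
        int (Poly_Mapping.lookup \<nu> (p * N + j)) \<ge> int p + (int (p * N + j) - 1) * int g) \<and>
     (\<forall>p j. p + 2 \<le> m \<longrightarrow> N - k1 + 1 \<le> j \<longrightarrow> j \<le> N \<longrightarrow>
        int (Poly_Mapping.lookup \<nu> (p * N + j)) \<ge> int p + 1 + (int (p * N + j) - 1) * int g) \<and>
     (\<forall>j. 1 \<le> j \<longrightarrow> j \<le> N - k \<longrightarrow>
        int (Poly_Mapping.lookup \<nu> (N * (m - 1) + j)) \<ge> int m - 1 + (int ((m - 1) * N + j) - 1) * int g) \<and>
     (\<forall>p j. p + 1 \<le> m \<longrightarrow> 1 \<le> j \<longrightarrow> j \<le> N - k \<longrightarrow>
        int (Poly_Mapping.lookup \<nu> (p * N + j)) \<le> int m + int p - 1 + (int ((m + p) * N) - int k + int j - 2) * int g) \<and>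
     (\<forall>p j. p + 2 \<le> m \<longrightarrow> N - k + 1 \<le> j \<longrightarrow> j \<le> N - k + k3 \<longrightarrow>
        int (Poly_Mapping.lookup \<nu> (p * N + j)) \<le> int m + int p - 1 + (int ((m + p) * N) - int k + int j - 2) * int g) \<and>
     (\<forall>p j. p + 2 \<le> m \<longrightarrow> N - k + k3 + 1 \<le> j \<longrightarrow> j \<le> N \<longrightarrow>
        int (Poly_Mapping.lookup \<nu> (p * N + j)) \<le> int m + int p + (int ((m + p) * N) - int k + int j - 2) * int g)"
proof -
  interpret nonvanishing_monomial N m k k1 k3 n s g \<nu>
    using assms by unfold_locales (auto intro: mono_onI)
  have index: "int n + int (p * N + j) - 2 = int ((m + p) * N) - int k + int j - 2" for p j
    using int_n_eq by (simp add: algebra_simps)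
  show ?thesis
  proof (intro conjI allI impI)
    fix p j
    assume "p + 2 \<le> m" "1 \<le> j" "j \<le> N - k1"
    then show "int p + (int (p * N + j) - 1) * int g \<le> int (Poly_Mapping.lookup \<nu> (p * N + j))"
      by (intro exponent_ge index_le_n[of _ "p + 1"]) auto
  next
    fix p j
    assume "p + 2 \<le> m" "N - k1 + 1 \<le> j" "j \<le> N"
    then show "int p + 1 + (int (p * N + j) - 1) * int g \<le> int (Poly_Mapping.lookup \<nu> (p * N + j))"
      by (intro exponent_ge_Suc index_le_n[of _ "p + 1"]) auto
  next
    fix j
    assume "1 \<le> j" "j \<le> N - k"
    then have "int m - 1 + (int ((m - 1) * N + j) - 1) * int g \<le> int (Poly_Mapping.lookup \<nu> ((m - 1) * N + j))"
      using m_pos exponent_ge[of "m - 1" "(m - 1) * N + j"] index_le_n[of "(m - 1) * N + j" "m - 1"] by simp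
    then show "int m - 1 + (int ((m - 1) * N + j) - 1) * int g \<le> int (Poly_Mapping.lookup \<nu> (N * (m - 1) + j))"
      by (simp add: mult.commute)
  next
    fix p j
    assume "p + 1 \<le> m" "1 \<le> j" "j \<le> N - k"
    then show "int (Poly_Mapping.lookup \<nu> (p * N + j)) \<le> int m + int p - 1 + (int ((m + p) * N) - int k + int j - 2) * int g"
      unfolding index[symmetric] by (intro exponent_le) auto
  next
    fix p j
    assume "p + 2 \<le> m" "N - k + 1 \<le> j" "j \<le> N - k + k3"
    then show "int (Poly_Mapping.lookup \<nu> (p * N + j)) \<le> int m + int p - 1 + (int ((m + p) * N) - int k + int j - 2) * int g"
      unfolding index[symmetric] by (intro exponent_le_k3) auto
  next
    fix p j
    assume "p + 2 \<le> m" "N - k + k3 + 1 \<le> j" "j \<le> N"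
    then show "int (Poly_Mapping.lookup \<nu> (p * N + j)) \<le> int m + int p + (int ((m + p) * N) - int k + int j - 2) * int g"
      unfolding index[symmetric] by (intro exponent_le_Suc) auto
  qed
qed

end
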